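(* Let $\mathcal{H}$ be a Hilbert space of finite or countably infinite dimension, let $\Omega$ be a finite set and let $\mathcal{I}=(\mathcal{I}_\omega)_{\omega\in\Omega}$ be an instrument on $\Omega$. For $n\in\mathbb{N}$ let $\mathsf{A}^\mathcal{I}_n$ be the observable on $\Omega^n$ given by $\mathsf{A}^\mathcal{I}_n(\omega_1,\ldots,\omega_n)=\mathcal{I}_{\omega_1}\circ\cdots\circ\mathcal{I}_{\omega_n}(\mathbb{1})$. If $\mathsf{A}^\mathcal{I}_n\simeq\mathsf{A}^\mathcal{I}_{n+1}$ for some $n\in\mathbb{N}$, then $\mathsf{A}^\mathcal{I}_n\simeq\mathsf{A}^\mathcal{I}_m$ for all $m\geq n$.
   Context: An observable with finite outcome set $\Omega_\mathsf{A}$ is a map $\omega\mapsto\mathsf{A}(\omega)$ into bounded operators on $\mathcal{H}$ with each $\mathsf{A}(\omega)\geq 0$ and $\sum_\omega\mathsf{A}(\omega)=\mathbb{1}$. An instrument on a finite set $\Omega$ (Heisenberg picture) is a family $(\mathcal{I}_\omega)_{\omega\in\Omega}$ of normal completely positive maps on the bounded operators $\mathcal{L}(\mathcal{H})$ with $\sum_\omega\mathcal{I}_\omega(\mathbb{1})=\mathbb{1}$; $\mathcal{I}_{\omega}\circ\mathcal{I}_{\omega'}$ denotes functional composition. For observables $\mathsf{A},\mathsf{B}$ with finite outcome sets, $\mathsf{A}\preceq\mathsf{B}$ means there is a Markov kernel $\kappa:\Omega_\mathsf{A}\times\Omega_\mathsf{B}\to[0,1]$ (i.e. $\sum_\omega\kappa(\omega|\omega')=1$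 for all $\omega'$) with $\mathsf{A}(\omega)=\sum_{\omega'}\kappa(\omega|\omega')\mathsf{B}(\omega')$ for all $\omega$; $\mathsf{A}\simeq\mathsf{B}$ means $\mathsf{A}\preceq\mathsf{B}$ and $\mathsf{B}\preceq\mathsf{A}$. *)

theory Defs
  imports "HOL-Analysis.Analysis" "HOL-Library.Function_Algebras"
begin

text \<open>
  A Hilbert space of finite or countably infinite dimension is (up to unitary
  equivalence) the space l2('i) of square-summable complex functions on a countable
  index type 'i (finite 'i = finite dimension). A bounded operator T on l2('i) is
  represented by its matrix (i,j) |-> <e_i, T e_j>; this is a bijection between
  bounded operators and the matrices satisfying bounded_op below, under which sums,
  scalar multiples and the identity correspond to the pointwise ones.
\<close>

type_synonym 'i vec = "'i \<Rightarrow> complex"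
type_synonym 'i bop = "'i \<Rightarrow> 'i \<Rightarrow> complex"

definition l2 :: "('i vec) set" where
  "l2 = {x. (\<lambda>i. (cmod (x i))^2) summable_on UNIV}"

definition l2norm :: "'i vec \<Rightarrow> real" where
  "l2norm x = sqrt (infsum (\<lambda>i. (cmod (x i))^2) UNIV)"

definition cinner_l2 :: "'i vec \<Rightarrow> 'i vec \<Rightarrow> complex" where
  "cinner_l2 x y = infsum (\<lambda>i. cnj (x i) * y i) UNIV"

definition apply_op :: "'i bop \<Rightarrow> 'i vec \<Rightarrow> 'i vec" where
  "apply_op M x = (\<lambda>i. infsum (\<lambda>j. M i j * x j) UNIV)"

definition bounded_op :: "'i bop \<Rightarrow> bool" where
  "bounded_op M \<longleftrightarrow> (\<exists>C. \<forall>x\<in>l2. (\<forall>i. (\<lambda>j. M i j * x j) summable_on UNIV)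
      \<and> apply_op M x \<in> l2 \<and> l2norm (apply_op M x) \<le> C * l2norm x)"

definition cnonneg :: "complex \<Rightarrow> bool" where
  "cnonneg z \<longleftrightarrow> Im z = 0 \<and> 0 \<le> Re z"

definition positive_op :: "'i bop \<Rightarrow> bool" where
  "positive_op M \<longleftrightarrow> bounded_op M \<and> (\<forall>x\<in>l2. cnonneg (cinner_l2 x (apply_op M x)))"

definition id_op :: "'i bop" where
  "id_op = (\<lambda>i j. if i = j then 1 else 0)"

definition op_le :: "'i bop \<Rightarrow> 'i bop \<Rightarrow> bool" where
  "op_le M N \<longleftrightarrow> bounded_op M \<and> bounded_op N \<and> positive_op (\<lambda>i j. N i j - M i j)"

text \<open>Maps on L(H), given as maps on matrices (only their values on bounded operators matter).\<close>
definition linear_map :: "('i bop \<Rightarrow> 'i bop) \<Rightarrow> bool" where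
  "linear_map \<Phi> \<longleftrightarrow> (\<forall>M. bounded_op M \<longrightarrow> bounded_op (\<Phi> M))
     \<and> (\<forall>M N. bounded_op M \<longrightarrow> bounded_op N \<longrightarrow>
            \<Phi> (\<lambda>i j. M i j + N i j) = (\<lambda>i j. \<Phi> M i j + \<Phi> N i j))
     \<and> (\<forall>c M. bounded_op M \<longrightarrow> \<Phi> (\<lambda>i j. c * M i j) = (\<lambda>i j. c * \<Phi> M i j))"

definition block_positive :: "nat \<Rightarrow> (nat \<Rightarrow> nat \<Rightarrow> 'i bop) \<Rightarrow> bool" where
  "block_positive n T \<longleftrightarrow> (\<forall>k<n. \<forall>l<n. bounded_op (T k l)) \<and>
     (\<forall>x. (\<forall>k<n. x k \<in> l2) \<longrightarrow>
        cnonneg (\<Sum>k<n. \<Sum>l<n. cinner_l2 (x k) (apply_op (T k l) (x l))))"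

definition completely_positive :: "('i bop \<Rightarrow> 'i bop) \<Rightarrow> bool" where
  "completely_positive \<Phi> \<longleftrightarrow> linear_map \<Phi> \<and>
     (\<forall>n T. block_positive n T \<longrightarrow> block_positive n (\<lambda>k l. \<Phi> (T k l)))"

definition is_lub_op :: "'i bop set \<Rightarrow> 'i bop \<Rightarrow> bool" where
  "is_lub_op S T \<longleftrightarrow> (\<forall>s\<in>S. op_le s T) \<and> (\<forall>U. (\<forall>s\<in>S. op_le s U) \<longrightarrow> op_le T U)"

text \<open>Normal (for positive maps): preserves suprema of bounded increasing nets of positive
  operators; an increasing net is represented by its (upward directed) range.\<close>
definition normal_map :: "('i bop \<Rightarrow> 'i bop) \<Rightarrow> bool" where
  "normal_map \<Phi> \<longleftrightarrow> (\<forall>S T. S \<noteq> {} \<longrightarrow> (\<forall>s\<in>S. positive_op s) \<longrightarrow>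
      (\<forall>a\<in>S. \<forall>b\<in>S. \<exists>c\<in>S. op_le a c \<and> op_le b c) \<longrightarrow>
      is_lub_op S T \<longrightarrow> is_lub_op (\<Phi> ` S) (\<Phi> T))"

definition instrument :: "'w set \<Rightarrow> ('w \<Rightarrow> 'i bop \<Rightarrow> 'i bop) \<Rightarrow> bool" where
  "instrument \<Omega> \<I> \<longleftrightarrow> finite \<Omega> \<and>
     (\<forall>\<omega>\<in>\<Omega>. completely_positive (\<I> \<omega>) \<and> normal_map (\<I> \<omega>)) \<and>
     (\<Sum>\<omega>\<in>\<Omega>. \<I> \<omega> id_op) = id_op"

definition observable :: "'w set \<Rightarrow> ('w \<Rightarrow> 'i bop) \<Rightarrow> bool" where
  "observable \<Omega> A \<longleftrightarrow> finite \<Omega> \<and> (\<forall>\<omega>\<in>\<Omega>. positive_op (A \<omega>)) \<and> (\<Sum>\<omega>\<in>\<Omega>. A \<omega>) = id_op"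

definition post_proc :: "'a set \<Rightarrow> ('a \<Rightarrow> 'i bop) \<Rightarrow> 'b set \<Rightarrow> ('b \<Rightarrow> 'i bop) \<Rightarrow> bool" where
  "post_proc \<Omega>A A \<Omega>B B \<longleftrightarrow> (\<exists>\<kappa> :: 'a \<Rightarrow> 'b \<Rightarrow> real.
     (\<forall>a\<in>\<Omega>A. \<forall>b\<in>\<Omega>B. 0 \<le> \<kappa> a b \<and> \<kappa> a b \<le> 1) \<and>
     (\<forall>b\<in>\<Omega>B. (\<Sum>a\<in>\<Omega>A. \<kappa> a b) = 1) \<and>
     (\<forall>a\<in>\<Omega>A. A a = (\<Sum>b\<in>\<Omega>B. (\<lambda>i j. complex_of_real (\<kappa> a b) * B b i j))))"

definition obs_equiv :: "'a set \<Rightarrow> ('a \<Rightarrow> 'i bop) \<Rightarrow> 'b set \<Rightarrow> ('b \<Rightarrow> 'i bop) \<Rightarrow> bool" where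
  "obs_equiv \<Omega>A A \<Omega>B B \<longleftrightarrow> post_proc \<Omega>A A \<Omega>B B \<and> post_proc \<Omega>B B \<Omega>A A"

text \<open>Omega^n as lists of length n, and A_n(w1..wn) = I_w1 o ... o I_wn (1).\<close>
definition outcomes :: "'w set \<Rightarrow> nat \<Rightarrow> 'w list set" where
  "outcomes \<Omega> n = {ws. length ws = n \<and> set ws \<subseteq> \<Omega>}"

definition seq_obs :: "('w \<Rightarrow> 'i bop \<Rightarrow> 'i bop) \<Rightarrow> 'w list \<Rightarrow> 'i bop" where
  "seq_obs \<I> ws = foldr (\<lambda>\<omega> M. \<I> \<omega> M) ws id_op"

end

theory Submission
  imports Defs
begin

text \<open>
  Write \<open>A p\<close> for the sequential observable on words of length \<open>p\<close>, so that
  \<open>A (p+1) (\<omega> # w) = \<I> \<omega> (A p w)\<close>. If a Markov kernel \<open>\<kappa>\<close> post-processes \<open>A q\<close> into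
  \<open>A p\<close>, then by linearity of each \<open>\<I> \<omega>\<close> the kernel that keeps the first letter and applies
  \<open>\<kappa>\<close> to the remaining word post-processes \<open>A (q+1)\<close> into \<open>A (p+1)\<close>. Hence \<open>A n \<simeq> A (n+1)\<close>
  propagates to \<open>A (n+k) \<simeq> A (n+k+1)\<close> for every \<open>k\<close>, and these equivalences chain together
  because Markov kernels compose.
\<close>

lemma sum_fun_apply2: "(sum f A) i j = (\<Sum>a\<in>A. f a i j)"
  by (induction A rule: infinite_finite_induct) auto

lemma has_sum_delta: "((\<lambda>j. if j = i then c else 0) has_sum c) UNIV"
  by (rule has_sum_finite_neutralI[of "{i}"]) auto

lemma l2norm_nonneg: "l2norm x \<ge> 0"
  unfolding l2norm_def by (simp add: infsum_nonneg)

lemma l2norm_power2: "l2norm x ^ 2 = infsum (\<lambda>i. (cmod (x i))^2) UNIV"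
  unfolding l2norm_def by (simp add: infsum_nonneg)

lemma l2_scale:
  assumes "x \<in> l2"
  shows "(\<lambda>i. c * x i) \<in> l2" and "l2norm (\<lambda>i. c * x i) = cmod c * l2norm x"
proof -
  have sq: "(\<lambda>i. (cmod (c * x i))^2) = (\<lambda>i. (cmod c)^2 * (cmod (x i))^2)"
    by (simp add: norm_mult power_mult_distrib)
  have s: "(\<lambda>i. (cmod (x i))^2) summable_on UNIV"
    using assms unfolding l2_def by simp
  have "(\<lambda>i. (cmod (c * x i))^2) summable_on UNIV"
    unfolding sq by (rule summable_on_cmult_right[OF s])
  then show "(\<lambda>i. c * x i) \<in> l2"
    unfolding l2_def by simp
  show "l2norm (\<lambda>i. c * x i) = cmod c * l2norm x"
    unfolding l2norm_def sq using s by (simp add: infsum_cmult_right real_sqrt_mult)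
qed

lemma l2_add:
  assumes "x \<in> l2" "y \<in> l2"
  shows "(\<lambda>i. x i + y i) \<in> l2"
    and "l2norm (\<lambda>i. x i + y i) \<le> sqrt (2 * l2norm x ^ 2 + 2 * l2norm y ^ 2)"
proof -
  have sx: "(\<lambda>i. (cmod (x i))^2) summable_on UNIV"
    and sy: "(\<lambda>i. (cmod (y i))^2) summable_on UNIV"
    using assms unfolding l2_def by auto
  have pointwise: "(cmod (x i + y i))^2 \<le> 2 * (cmod (x i))^2 + 2 * (cmod (y i))^2" for i
  proof -
    have "(cmod (x i + y i))^2 \<le> (cmod (x i) + cmod (y i))^2"
      by (rule power_mono[OF norm_triangle_ineq]) simp
    also have "\<dots> \<le> 2 * (cmod (x i))^2 + 2 * (cmod (y i))^2"
      using zero_le_power2[of "cmod (x i) - cmod (y i)"] by (simp add: power2_diff power2_sum)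
    finally show ?thesis .
  qed
  have s2: "(\<lambda>i. 2 * (cmod (x i))^2 + 2 * (cmod (y i))^2) summable_on UNIV"
    by (intro summable_on_add summable_on_cmult_right sx sy)
  have sxy: "(\<lambda>i. (cmod (x i + y i))^2) summable_on UNIV"
    by (rule summable_on_comparison_test[OF s2]) (auto simp: pointwise)
  then show "(\<lambda>i. x i + y i) \<in> l2"
    unfolding l2_def by simp
  have "infsum (\<lambda>i. (cmod (x i + y i))^2) UNIV
      \<le> infsum (\<lambda>i. 2 * (cmod (x i))^2 + 2 * (cmod (y i))^2) UNIV"
    by (rule infsum_mono[OF sxy s2 pointwise])
  also have "\<dots> = 2 * l2norm x ^ 2 + 2 * l2norm y ^ 2"
    unfolding l2norm_power2
    by (simp add: infsum_add summable_on_cmult_right sx sy infsum_cmult_right)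
  finally show "l2norm (\<lambda>i. x i + y i) \<le> sqrt (2 * l2norm x ^ 2 + 2 * l2norm y ^ 2)"
    unfolding l2norm_def by (rule real_sqrt_le_mono)
qed

lemma apply_op_id: "apply_op id_op x = x"
proof
  fix i
  have "(\<lambda>j. id_op i j * x j) = (\<lambda>j. if j = i then x i else 0)"
    by (auto simp: id_op_def)
  then show "apply_op id_op x i = x i"
    unfolding apply_op_def using infsumI[OF has_sum_delta] by simp
qed

lemma apply_op_scale:
  assumes "\<And>i. (\<lambda>j. M i j * x j) summable_on UNIV"
  shows "apply_op (\<lambda>i j. c * M i j) x = (\<lambda>i. c * apply_op M x i)"
  unfolding apply_op_def using infsum_cmult_right[OF assms] by (simp add: mult.assoc)

lemma apply_op_add:
  assumes "\<And>i. (\<lambda>j. M i j * x j) summable_on UNIV" "\<And>i. (\<lambda>j. N i j * x j) summable_on UNIV"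
  shows "apply_op (\<lambda>i j. M i j + N i j) x = (\<lambda>i. apply_op M x i + apply_op N x i)"
  unfolding apply_op_def using infsum_add[OF assms] by (simp add: distrib_right)

lemma bounded_op_zero: "bounded_op (\<lambda>i j. 0)"
  unfolding bounded_op_def
  by (rule exI[of _ 0]) (auto simp: apply_op_def l2_def l2norm_def)

lemma bounded_op_id: "bounded_op id_op"
proof -
  have "(\<lambda>j. id_op i j * x j) = (\<lambda>j. if j = i then x i else 0)" for i and x :: "'a vec"
    by (auto simp: id_op_def)
  then have "(\<lambda>j. id_op i j * x j) summable_on UNIV" for i and x :: "'a vec"
    unfolding summable_on_def using has_sum_delta by metis
  then show ?thesis
    unfolding bounded_op_def apply_op_id by (intro exI[of _ 1]) auto
qed

lemma bounded_op_scale: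
  assumes "bounded_op M"
  shows "bounded_op (\<lambda>i j. c * M i j)"
proof -
  obtain C where C: "\<forall>x\<in>l2. (\<forall>i. (\<lambda>j. M i j * x j) summable_on UNIV)
      \<and> apply_op M x \<in> l2 \<and> l2norm (apply_op M x) \<le> C * l2norm x"
    using assms unfolding bounded_op_def by blast
  show ?thesis unfolding bounded_op_def
  proof (intro exI[of _ "cmod c * C"] ballI conjI allI)
    fix x :: "'a vec" and i
    assume x: "x \<in> l2"
    then have s: "\<And>i. (\<lambda>j. M i j * x j) summable_on UNIV"
      and y: "apply_op M x \<in> l2" and yn: "l2norm (apply_op M x) \<le> C * l2norm x"
      using C by auto
    show "(\<lambda>j. c * M i j * x j) summable_on UNIV"
      using summable_on_cmult_right[OF s] by (simp add: mult.assoc)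
    show "apply_op (\<lambda>i j. c * M i j) x \<in> l2"
      unfolding apply_op_scale[OF s] by (rule l2_scale(1)[OF y])
    have "l2norm (apply_op (\<lambda>i j. c * M i j) x) = cmod c * l2norm (apply_op M x)"
      unfolding apply_op_scale[OF s] by (rule l2_scale(2)[OF y])
    also have "\<dots> \<le> cmod c * C * l2norm x"
      using mult_left_mono[OF yn] by (simp add: mult.assoc)
    finally show "l2norm (apply_op (\<lambda>i j. c * M i j) x) \<le> cmod c * C * l2norm x" .
  qed
qed

lemma bounded_op_add:
  assumes "bounded_op M" "bounded_op N"
  shows "bounded_op (\<lambda>i j. M i j + N i j)"
proof -
  obtain C where C: "\<forall>x\<in>l2. (\<forall>i. (\<lambda>j. M i j * x j) summable_on UNIV)
      \<and> apply_op M x \<in> l2 \<and> l2norm (apply_op M x) \<le> C * l2norm x"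
    using assms unfolding bounded_op_def by blast
  obtain D where D: "\<forall>x\<in>l2. (\<forall>i. (\<lambda>j. N i j * x j) summable_on UNIV)
      \<and> apply_op N x \<in> l2 \<and> l2norm (apply_op N x) \<le> D * l2norm x"
    using assms unfolding bounded_op_def by blast
  show ?thesis unfolding bounded_op_def
  proof (intro exI[of _ "sqrt (2 * C^2 + 2 * D^2)"] ballI conjI allI)
    fix x :: "'a vec" and i
    assume x: "x \<in> l2"
    then have sM: "\<And>i. (\<lambda>j. M i j * x j) summable_on UNIV"
      and sN: "\<And>i. (\<lambda>j. N i j * x j) summable_on UNIV"
      and y: "apply_op M x \<in> l2" and yn: "l2norm (apply_op M x) \<le> C * l2norm x"
      and z: "apply_op N x \<in> l2" and zn: "l2norm (apply_op N x) \<le> D * l2norm x"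
      using C D by auto
    show "(\<lambda>j. (M i j + N i j) * x j) summable_on UNIV"
      using summable_on_add[OF sM sN] by (simp add: distrib_right)
    show "apply_op (\<lambda>i j. M i j + N i j) x \<in> l2"
      unfolding apply_op_add[OF sM sN] by (rule l2_add(1)[OF y z])
    have "l2norm (apply_op (\<lambda>i j. M i j + N i j) x)
        \<le> sqrt (2 * l2norm (apply_op M x) ^ 2 + 2 * l2norm (apply_op N x) ^ 2)"
      unfolding apply_op_add[OF sM sN] by (rule l2_add(2)[OF y z])
    also have "\<dots> \<le> sqrt (2 * (C * l2norm x) ^ 2 + 2 * (D * l2norm x) ^ 2)"
      using power_mono[OF yn l2norm_nonneg, of 2] power_mono[OF zn l2norm_nonneg, of 2] by simp
    also have "\<dots> = sqrt (l2norm x ^ 2 * (2 * C^2 + 2 * D^2))"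
      by (simp add: power_mult_distrib algebra_simps)
    also have "\<dots> = sqrt (2 * C^2 + 2 * D^2) * l2norm x"
      by (simp add: real_sqrt_mult l2norm_nonneg)
    finally show "l2norm (apply_op (\<lambda>i j. M i j + N i j) x) \<le> sqrt (2 * C^2 + 2 * D^2) * l2norm x" .
  qed
qed

lemma bounded_op_sum:
  assumes "finite U" "\<forall>u\<in>U. bounded_op (M u)"
  shows "bounded_op (\<Sum>u\<in>U. (\<lambda>i j. c u * M u i j))"
  using assms
proof (induction U rule: finite_induct)
  case empty
  then show ?case using bounded_op_zero by (simp add: zero_fun_def)
next
  case (insert a F)
  then have "bounded_op (\<lambda>i j. c a * M a i j + (\<Sum>u\<in>F. (\<lambda>i j. c u * M u i j)) i j)"
    by (intro bounded_op_add bounded_op_scale) auto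
  then show ?case using insert by (simp add: plus_fun_def)
qed

lemma linear_map_zero:
  assumes "linear_map \<Phi>"
  shows "\<Phi> (\<lambda>i j. 0) = (\<lambda>i j. 0)"
proof -
  have "\<Phi> (\<lambda>i j. 0 * 0) = (\<lambda>i j. 0 * \<Phi> (\<lambda>i j. 0) i j)"
    using assms bounded_op_zero unfolding linear_map_def by blast
  then show ?thesis by simp
qed

lemma linear_map_sum:
  assumes "linear_map \<Phi>" "finite U" "\<forall>u\<in>U. bounded_op (M u)"
  shows "\<Phi> (\<Sum>u\<in>U. (\<lambda>i j. c u * M u i j)) = (\<Sum>u\<in>U. (\<lambda>i j. c u * \<Phi> (M u) i j))"
  using assms(2,3)
proof (induction U rule: finite_induct)
  case empty
  then show ?case using linear_map_zero[OF assms(1)] by (simp add: zero_fun_def)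
next
  case (insert a F)
  have "bounded_op (\<lambda>i j. c a * M a i j)" "bounded_op (\<Sum>u\<in>F. (\<lambda>i j. c u * M u i j))"
    using insert by (auto intro: bounded_op_scale bounded_op_sum)
  with assms(1) insert show ?case
    unfolding linear_map_def by (simp add: plus_fun_def)
qed

lemma finite_outcomes: "finite \<Omega> \<Longrightarrow> finite (outcomes \<Omega> n)"
  unfolding outcomes_def using finite_lists_length_eq[of \<Omega> n] by (simp add: conj_commute)

lemma outcomes_Suc: "outcomes \<Omega> (Suc k) = (\<lambda>(w, ws). w # ws) ` (\<Omega> \<times> outcomes \<Omega> k)"
  unfolding outcomes_def by (auto simp: image_iff length_Suc_conv)

lemma sum_outcomes_Suc:
  "(\<Sum>a\<in>outcomes \<Omega> (Suc k). f a) = (\<Sum>w\<in>\<Omega>. \<Sum>ws\<in>outcomes \<Omega> k. f (w # ws))"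
proof -
  have "inj_on (\<lambda>(w, ws). w # ws) (\<Omega> \<times> outcomes \<Omega> k)"
    by (auto simp: inj_on_def)
  then show ?thesis
    unfolding outcomes_Suc by (simp add: sum.reindex sum.cartesian_product split_def)
qed

lemma seq_obs_Cons: "seq_obs \<I> (w # ws) = \<I> w (seq_obs \<I> ws)"
  by (simp add: seq_obs_def)

lemma bounded_op_seq_obs:
  assumes "\<forall>w\<in>\<Omega>. linear_map (\<I> w)" "set ws \<subseteq> \<Omega>"
  shows "bounded_op (seq_obs \<I> ws)"
  using assms(2)
  by (induction ws) (use assms(1) bounded_op_id in \<open>auto simp: seq_obs_def linear_map_def\<close>)

lemma sum_outcomes_Suc_hd_eq:
  assumes "finite \<Omega>" "w \<in> \<Omega>"
  shows "(\<Sum>b\<in>outcomes \<Omega> (Suc k). if hd b = w then g (tl b) else 0) = (\<Sum>u\<in>outcomes \<Omega> k. g u)"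
proof -
  have "(\<Sum>b\<in>outcomes \<Omega> (Suc k). if hd b = w then g (tl b) else 0)
      = (\<Sum>w'\<in>\<Omega>. if w' = w then (\<Sum>u\<in>outcomes \<Omega> k. g u) else 0)"
    unfolding sum_outcomes_Suc by (rule sum.cong) auto
  then show ?thesis
    using assms by simp
qed

lemma post_proc_refl:
  assumes "finite A"
  shows "post_proc A (f :: 'a \<Rightarrow> 'i bop) A f"
  unfolding post_proc_def
proof (intro exI[of _ "\<lambda>a b. if a = b then 1 else 0"] conjI ballI)
  fix a assume "a \<in> A"
  moreover have "(\<Sum>b\<in>A. (\<lambda>i j. complex_of_real (if a = b then 1 else 0) * f b i j))
      = (\<Sum>b\<in>A. if a = b then f b else 0)"
    by (rule sum.cong) (auto simp: zero_fun_def)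
  ultimately show "f a = (\<Sum>b\<in>A. (\<lambda>i j. complex_of_real (if a = b then 1 else 0) * f b i j))"
    using assms by simp
qed (use assms in auto)

lemma post_proc_trans:
  assumes "post_proc A (f :: 'a \<Rightarrow> 'i bop) B g" "post_proc B g C h"
  shows "post_proc A f C h"
proof -
  obtain \<kappa> where \<kappa>_range: "\<forall>a\<in>A. \<forall>b\<in>B. 0 \<le> \<kappa> a b \<and> \<kappa> a b \<le> 1"
    and \<kappa>_sum: "\<forall>b\<in>B. (\<Sum>a\<in>A. \<kappa> a b) = 1"
    and f_eq: "\<forall>a\<in>A. f a = (\<Sum>b\<in>B. (\<lambda>i j. complex_of_real (\<kappa> a b) * g b i j))"
    using assms(1) unfolding post_proc_def by blast
  obtain \<rho> where \<rho>_range: "\<forall>b\<in>B. \<forall>c\<in>C. 0 \<le> \<rho> b c \<and> \<rho> b c \<le> 1"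
    and \<rho>_sum: "\<forall>c\<in>C. (\<Sum>b\<in>B. \<rho> b c) = 1"
    and g_eq: "\<forall>b\<in>B. g b = (\<Sum>c\<in>C. (\<lambda>i j. complex_of_real (\<rho> b c) * h c i j))"
    using assms(2) unfolding post_proc_def by blast
  show ?thesis unfolding post_proc_def
  proof (intro exI[of _ "\<lambda>a c. \<Sum>b\<in>B. \<kappa> a b * \<rho> b c"] conjI ballI)
    fix a c assume a: "a \<in> A" and c: "c \<in> C"
    show "0 \<le> (\<Sum>b\<in>B. \<kappa> a b * \<rho> b c)"
      using \<kappa>_range \<rho>_range a c by (auto intro!: sum_nonneg)
    have "(\<Sum>b\<in>B. \<kappa> a b * \<rho> b c) \<le> (\<Sum>b\<in>B. \<rho> b c)"
      using \<kappa>_range \<rho>_range a c by (auto intro!: sum_mono mult_left_le_one_le)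
    then show "(\<Sum>b\<in>B. \<kappa> a b * \<rho> b c) \<le> 1"
      using \<rho>_sum c by simp
  next
    fix c assume c: "c \<in> C"
    have "(\<Sum>a\<in>A. \<Sum>b\<in>B. \<kappa> a b * \<rho> b c) = (\<Sum>b\<in>B. (\<Sum>a\<in>A. \<kappa> a b) * \<rho> b c)"
      by (subst sum.swap) (simp add: sum_distrib_right)
    then show "(\<Sum>a\<in>A. \<Sum>b\<in>B. \<kappa> a b * \<rho> b c) = 1"
      using \<kappa>_sum \<rho>_sum c by simp
  next
    fix a assume a: "a \<in> A"
    show "f a = (\<Sum>c\<in>C. (\<lambda>i j. complex_of_real (\<Sum>b\<in>B. \<kappa> a b * \<rho> b c) * h c i j))"
    proof (intro ext)
      fix i j
      have "f a i j = (\<Sum>b\<in>B. complex_of_real (\<kappa> a b) * (\<Sum>c\<in>C. complex_of_real (\<rho> b c) * h c i j))"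
        using f_eq g_eq a by (simp add: sum_fun_apply2)
      also have "\<dots> = (\<Sum>c\<in>C. complex_of_real (\<Sum>b\<in>B. \<kappa> a b * \<rho> b c) * h c i j)"
        by (simp add: sum_distrib_left sum_distrib_right of_real_sum mult.assoc) (rule sum.swap)
      finally show "f a i j = (\<Sum>c\<in>C. (\<lambda>i j. complex_of_real (\<Sum>b\<in>B. \<kappa> a b * \<rho> b c) * h c i j)) i j"
        by (simp add: sum_fun_apply2)
    qed
  qed
qed

definition lift_kernel :: "('w list \<Rightarrow> 'w list \<Rightarrow> real) \<Rightarrow> 'w list \<Rightarrow> 'w list \<Rightarrow> real" where
  "lift_kernel \<kappa> a b = (if hd a = hd b then \<kappa> (tl a) (tl b) else 0)"

lemma post_proc_seq_obs_Suc:
  assumes fin: "finite \<Omega>" and lin: "\<forall>w\<in>\<Omega>. linear_map (\<I> w)"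
    and pp: "post_proc (outcomes \<Omega> p) (seq_obs \<I>) (outcomes \<Omega> q) (seq_obs \<I>)"
  shows "post_proc (outcomes \<Omega> (Suc p)) (seq_obs \<I>) (outcomes \<Omega> (Suc q)) (seq_obs \<I>)"
proof -
  obtain \<kappa> where \<kappa>_range: "\<forall>a\<in>outcomes \<Omega> p. \<forall>b\<in>outcomes \<Omega> q. 0 \<le> \<kappa> a b \<and> \<kappa> a b \<le> 1"
    and \<kappa>_sum: "\<forall>b\<in>outcomes \<Omega> q. (\<Sum>a\<in>outcomes \<Omega> p. \<kappa> a b) = 1"
    and seq_obs_eq: "\<forall>a\<in>outcomes \<Omega> p.
      seq_obs \<I> a = (\<Sum>b\<in>outcomes \<Omega> q. (\<lambda>i j. complex_of_real (\<kappa> a b) * seq_obs \<I> b i j))"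
    using pp unfolding post_proc_def by blast
  show ?thesis unfolding post_proc_def
  proof (intro exI[of _ "lift_kernel \<kappa>"] conjI ballI)
    fix a b assume "a \<in> outcomes \<Omega> (Suc p)" "b \<in> outcomes \<Omega> (Suc q)"
    then have "tl a \<in> outcomes \<Omega> p" "tl b \<in> outcomes \<Omega> q"
      unfolding outcomes_Suc by auto
    then show "0 \<le> lift_kernel \<kappa> a b" "lift_kernel \<kappa> a b \<le> 1"
      using \<kappa>_range by (auto simp: lift_kernel_def)
  next
    fix b assume "b \<in> outcomes \<Omega> (Suc q)"
    then obtain w' u where b: "b = w' # u" "u \<in> outcomes \<Omega> q" "w' \<in> \<Omega>"
      unfolding outcomes_Suc by auto
    have "(\<Sum>a\<in>outcomes \<Omega> (Suc p). lift_kernel \<kappa> a b)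
        = (\<Sum>a\<in>outcomes \<Omega> (Suc p). if hd a = w' then \<kappa> (tl a) u else 0)"
      by (simp only: lift_kernel_def b(1) list.sel)
    also have "\<dots> = (\<Sum>v\<in>outcomes \<Omega> p. \<kappa> v u)"
      by (rule sum_outcomes_Suc_hd_eq[OF fin \<open>w' \<in> \<Omega>\<close>])
    finally show "(\<Sum>a\<in>outcomes \<Omega> (Suc p). lift_kernel \<kappa> a b) = 1"
      using \<kappa>_sum b by simp
  next
    fix a assume "a \<in> outcomes \<Omega> (Suc p)"
    then obtain w v where a: "a = w # v" "v \<in> outcomes \<Omega> p" "w \<in> \<Omega>"
      unfolding outcomes_Suc by auto
    have bounded: "\<forall>u\<in>outcomes \<Omega> q. bounded_op (seq_obs \<I> u)"
      using bounded_op_seq_obs[OF lin] unfolding outcomes_def by auto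
    have "seq_obs \<I> a = \<I> w (\<Sum>u\<in>outcomes \<Omega> q. (\<lambda>i j. complex_of_real (\<kappa> v u) * seq_obs \<I> u i j))"
      using seq_obs_eq a by (simp add: seq_obs_Cons)
    also have "\<dots> = (\<Sum>u\<in>outcomes \<Omega> q. (\<lambda>i j. complex_of_real (\<kappa> v u) * \<I> w (seq_obs \<I> u) i j))"
      using lin a(3) by (intro linear_map_sum finite_outcomes fin bounded) auto
    also have "\<dots> = (\<Sum>b\<in>outcomes \<Omega> (Suc q). if hd b = w
        then (\<lambda>i j. complex_of_real (\<kappa> v (tl b)) * \<I> w (seq_obs \<I> (tl b)) i j) else 0)"
      by (rule sum_outcomes_Suc_hd_eq[OF fin \<open>w \<in> \<Omega>\<close>, symmetric])
    also have "\<dots> = (\<Sum>b\<in>outcomes \<Omega> (Suc q).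
        (\<lambda>i j. complex_of_real (lift_kernel \<kappa> a b) * seq_obs \<I> b i j))"
      by (rule sum.cong) (auto simp: outcomes_Suc lift_kernel_def a seq_obs_Cons zero_fun_def)
    finally show "seq_obs \<I> a = (\<Sum>b\<in>outcomes \<Omega> (Suc q).
        (\<lambda>i j. complex_of_real (lift_kernel \<kappa> a b) * seq_obs \<I> b i j))" .
  qed
qed

lemma obs_equiv_refl: "finite A \<Longrightarrow> obs_equiv A f A f"
  unfolding obs_equiv_def by (simp add: post_proc_refl)

lemma obs_equiv_trans: "obs_equiv A f B g \<Longrightarrow> obs_equiv B g C h \<Longrightarrow> obs_equiv A f C h"
  unfolding obs_equiv_def by (blast intro: post_proc_trans)

lemma obs_equiv_seq_obs_Suc:
  assumes "finite \<Omega>" "\<forall>w\<in>\<Omega>. linear_map (\<I> w)"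
    and "obs_equiv (outcomes \<Omega> p) (seq_obs \<I>) (outcomes \<Omega> q) (seq_obs \<I>)"
  shows "obs_equiv (outcomes \<Omega> (Suc p)) (seq_obs \<I>) (outcomes \<Omega> (Suc q)) (seq_obs \<I>)"
  using assms unfolding obs_equiv_def by (blast intro: post_proc_seq_obs_Suc)

theorem proposition1:
  fixes \<Omega> :: "'w set" and \<I> :: "'w \<Rightarrow> ('i::countable) bop \<Rightarrow> 'i bop" and n :: nat
  assumes "instrument \<Omega> \<I>"
    and "n \<ge> 1"
    and "obs_equiv (outcomes \<Omega> n) (seq_obs \<I>) (outcomes \<Omega> (Suc n)) (seq_obs \<I>)"
  shows "\<forall>m\<ge>n. obs_equiv (outcomes \<Omega> n) (seq_obs \<I>) (outcomes \<Omega> m) (seq_obs \<I>)"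
proof -
  have fin: "finite \<Omega>" and lin: "\<forall>w\<in>\<Omega>. linear_map (\<I> w)"
    using assms(1) unfolding instrument_def completely_positive_def by auto
  have step: "obs_equiv (outcomes \<Omega> (n + k)) (seq_obs \<I>) (outcomes \<Omega> (Suc (n + k))) (seq_obs \<I>)" for k
    by (induction k) (simp_all add: assms(3) obs_equiv_seq_obs_Suc[OF fin lin])
  have "obs_equiv (outcomes \<Omega> n) (seq_obs \<I>) (outcomes \<Omega> (n + k)) (seq_obs \<I>)" for k
  proof (induction k)
    case 0
    show ?case by (simp add: obs_equiv_refl finite_outcomes fin)
  next
    case (Suc k)
    with step[of k] show ?case by (simp add: obs_equiv_trans)
  qed
  then show ?thesis
    by (metis le_add_diff_inverse)
qed

end
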